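(* Let $G$ be a graph that has a barbell partition. Then there is a matrix $M\in\mathcal{S}(G)$ that does not have the strong Arnold property (and hence does not have the strong spectral property).
   Context: All graphs are finite, simple, undirected. For a graph $G$ with vertex set $\{1,\ldots,n\}$, $\mathcal{S}(G)$ is the set of all real symmetric $n\times n$ matrices $A=(a_{ij})$ such that for $i\neq j$, $a_{ij}\neq 0$ iff $\{i,j\}\in E(G)$ (diagonal arbitrary). A real symmetric matrix $A$ has the strong Arnold property (SAP) if the only real symmetric $X$ with $A\circ X=0$, $I\circ X=0$ and $AX=0$ is $X=0$; it has the strong spectral property (SSP) if the only real symmetric $X$ with $A\circ X=0$, $I\circ X=0$ and $AX-XA=0$ is $X=0$ ($\circ$ is the entrywise product). A barbell partition of $G$ is a partition of $V(G)$ into three disjoint sets $R,W_1,W_2$ such that: $R$ may be empty but $W_1\neq\emptyset$ and $W_2\neq\emptyset$; there are no edges between $W_1$ and $W_2$; and for every $v\in R$ and $i=1,2$, $|N_G(v)\cap W_i|\neq 1$, where $N_G(v)$ is the set of neighbours of $v$. *)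

theory Defs
  imports "HOL-Analysis.Analysis"
begin

definition simple_graph :: "('n::finite \<Rightarrow> 'n \<Rightarrow> bool) \<Rightarrow> bool" where
  "simple_graph E \<longleftrightarrow> (\<forall>u v. E u v = E v u) \<and> (\<forall>v. \<not> E v v)"

definition nbhd :: "('n \<Rightarrow> 'n \<Rightarrow> bool) \<Rightarrow> 'n \<Rightarrow> 'n set" where
  "nbhd E v = {u. E v u}"

definition hadamard :: "real^'n^'m \<Rightarrow> real^'n^'m \<Rightarrow> real^'n^'m" where
  "hadamard A B = (\<chi> i j. A $ i $ j * B $ i $ j)"

definition S_graph :: "('n::finite \<Rightarrow> 'n \<Rightarrow> bool) \<Rightarrow> (real^'n^'n) set" where
  "S_graph E = {A. transpose A = A \<and> (\<forall>i j. i \<noteq> j \<longrightarrow> (A $ i $ j \<noteq> 0 \<longleftrightarrow> E i j))}"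

definition SAP :: "real^'n^'n \<Rightarrow> bool" where
  "SAP A \<longleftrightarrow> (\<forall>X::real^'n^'n. transpose X = X \<and> hadamard A X = 0 \<and> hadamard (mat 1) X = 0
      \<and> A ** X = 0 \<longrightarrow> X = 0)"

definition SSP :: "real^'n^'n \<Rightarrow> bool" where
  "SSP A \<longleftrightarrow> (\<forall>X::real^'n^'n. transpose X = X \<and> hadamard A X = 0 \<and> hadamard (mat 1) X = 0
      \<and> A ** X - X ** A = 0 \<longrightarrow> X = 0)"

definition barbell_partition ::
  "('n::finite \<Rightarrow> 'n \<Rightarrow> bool) \<Rightarrow> 'n set \<Rightarrow> 'n set \<Rightarrow> 'n set \<Rightarrow> bool" where
  "barbell_partition E R W1 W2 \<longleftrightarrow>
     R \<union> W1 \<union> W2 = UNIV \<and> R \<inter> W1 = {} \<and> R \<inter> W2 = {} \<and> W1 \<inter> W2 = {} \<and>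
     W1 \<noteq> {} \<and> W2 \<noteq> {} \<and>
     (\<forall>u\<in>W1. \<forall>v\<in>W2. \<not> E u v) \<and>
     (\<forall>v\<in>R. card (nbhd E v \<inter> W1) \<noteq> 1 \<and> card (nbhd E v \<inter> W2) \<noteq> 1)"

end

theory Submission
  imports Defs
begin

text \<open>Choose M in S(G) whose rows all sum to zero over W1 and over W2: the diagonal
absorbs the sums for rows in W1 and W2, there are no edges between W1 and W2, and a
vertex of R has either none or at least two neighbours in each Wi, so its nonzero
weights on them can be balanced to sum to zero. Then the symmetric matrix X that is 1
exactly on (W1 \<times> W2) \<union> (W2 \<times> W1) is nonzero, vanishes on the diagonal and on the support
of M, and satisfies MX = 0, since every column of X is the indicator vector of W1 or W2.
As XM is the transpose of MX, the same X also violates the strong spectral property.\<close>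

lemma SAP_if_SSP:
  fixes A :: "real^'n^'n"
  assumes "transpose A = A" and "SSP A"
  shows "SAP A"
  unfolding SAP_def
proof (intro allI impI)
  fix X :: "real^'n^'n"
  assume X: "transpose X = X \<and> hadamard A X = 0 \<and> hadamard (mat 1) X = 0 \<and> A ** X = 0"
  have "X ** A = transpose (A ** X)"
    using assms(1) X by (metis matrix_transpose_mul)
  with X have "A ** X - X ** A = 0"
    by (simp add: transpose_def vec_eq_iff)
  with X assms(2) show "X = 0"
    unfolding SSP_def by blast
qed

definition cross_indicator :: "'n set \<Rightarrow> 'n set \<Rightarrow> real^'n^'n" where
  "cross_indicator W1 W2 = (\<chi> i j. if i \<in> W1 \<and> j \<in> W2 \<or> i \<in> W2 \<and> j \<in> W1 then 1 else 0)"

lemma matrix_mult_cross_indicator: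
  fixes M :: "real^'n::finite^'n"
  assumes "W1 \<inter> W2 = {}"
  shows "(M ** cross_indicator W1 W2) $ i $ k =
    (if k \<in> W1 then \<Sum>j\<in>W2. M $ i $ j else if k \<in> W2 then \<Sum>j\<in>W1. M $ i $ j else 0)"
proof -
  have "(M ** cross_indicator W1 W2) $ i $ k =
      (\<Sum>j\<in>UNIV. if j \<in> (if k \<in> W1 then W2 else if k \<in> W2 then W1 else {}) then M $ i $ j else 0)"
    unfolding matrix_matrix_mult_def cross_indicator_def using assms
    by (auto intro!: sum.cong)
  then show ?thesis
    by (simp add: sum.inter_restrict[symmetric])
qed

definition with_diagonal :: "real^'n^'n \<Rightarrow> ('n \<Rightarrow> real) \<Rightarrow> real^'n^'n" where
  "with_diagonal A d = (\<chi> i j. if i = j then d i else A $ i $ j)"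

lemma sum_row_with_diagonal:
  fixes A :: "real^'n::finite^'n"
  shows "(\<Sum>j\<in>W. with_diagonal A d $ i $ j) =
    (if i \<in> W then d i + (\<Sum>j\<in>W - {i}. A $ i $ j) else \<Sum>j\<in>W. A $ i $ j)"
proof (cases "i \<in> W")
  case True
  then have "(\<Sum>j\<in>W. with_diagonal A d $ i $ j) =
      d i + (\<Sum>j\<in>W - {i}. with_diagonal A d $ i $ j)"
    by (simp add: sum.remove with_diagonal_def)
  also have "(\<Sum>j\<in>W - {i}. with_diagonal A d $ i $ j) = (\<Sum>j\<in>W - {i}. A $ i $ j)"
    by (rule sum.cong) (auto simp: with_diagonal_def)
  finally show ?thesis
    using True by simp
next
  case False
  then show ?thesis
    by (auto simp: with_diagonal_def intro!: sum.cong)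
qed

lemma block_row_sums_zero_with_diagonal:
  fixes A :: "real^'n::finite^'n"
  assumes "W1 \<inter> W2 = {}"
    and "\<And>i j. i \<in> W1 \<Longrightarrow> j \<in> W2 \<Longrightarrow> A $ i $ j = 0"
    and "\<And>i j. i \<in> W2 \<Longrightarrow> j \<in> W1 \<Longrightarrow> A $ i $ j = 0"
    and "\<And>i. i \<notin> W1 \<Longrightarrow> i \<notin> W2 \<Longrightarrow> (\<Sum>j\<in>W1. A $ i $ j) = 0 \<and> (\<Sum>j\<in>W2. A $ i $ j) = 0"
  obtains d where "\<And>i. (\<Sum>j\<in>W1. with_diagonal A d $ i $ j) = 0"
    and "\<And>i. (\<Sum>j\<in>W2. with_diagonal A d $ i $ j) = 0"
proof -
  define d where "d i = (if i \<in> W1 then - (\<Sum>j\<in>W1 - {i}. A $ i $ j)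
      else if i \<in> W2 then - (\<Sum>j\<in>W2 - {i}. A $ i $ j) else 0)" for i
  have across: "(\<Sum>j\<in>W. A $ i $ j) = 0"
    if "W = W2 \<and> i \<in> W1 \<or> W = W1 \<and> i \<in> W2" for i W
    using that assms(2,3) by (auto intro: sum.neutral)
  have "(\<Sum>j\<in>W1. with_diagonal A d $ i $ j) = 0 \<and> (\<Sum>j\<in>W2. with_diagonal A d $ i $ j) = 0"
    for i
    using assms(1) assms(4)[of i] across[of W1 i] across[of W2 i]
    by (auto simp: sum_row_with_diagonal d_def)
  then show thesis
    using that by blast
qed

lemma not_SAP_if_block_row_sums_zero:
  fixes M :: "real^'n::finite^'n"
  assumes "transpose M = M" and "W1 \<inter> W2 = {}" and "W1 \<noteq> {}" and "W2 \<noteq> {}"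
    and "\<And>i j. i \<in> W1 \<Longrightarrow> j \<in> W2 \<Longrightarrow> M $ i $ j = 0"
    and "\<And>i. (\<Sum>j\<in>W1. M $ i $ j) = 0" and "\<And>i. (\<Sum>j\<in>W2. M $ i $ j) = 0"
  shows "\<not> SAP M"
proof -
  define X where "X = cross_indicator W1 W2"
  obtain a b where "a \<in> W1" "b \<in> W2"
    using assms(3,4) by blast
  with assms(2) have "X \<noteq> 0"
    by (auto simp: X_def cross_indicator_def vec_eq_iff)
  moreover have "transpose X = X"
    by (auto simp: X_def cross_indicator_def transpose_def vec_eq_iff)
  moreover have "M $ j $ i = 0" if "i \<in> W1" "j \<in> W2" for i j
    using assms(5)[OF that] arg_cong[OF assms(1), of "\<lambda>A. A $ i $ j"]
    by (simp add: transpose_def)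
  with assms(2,5) have "hadamard M X = 0"
    by (auto simp: hadamard_def X_def cross_indicator_def vec_eq_iff)
  moreover have "hadamard (mat 1) X = 0"
    using assms(2) by (auto simp: hadamard_def mat_def X_def cross_indicator_def vec_eq_iff)
  moreover have "M ** X = 0"
    using assms(2,6,7) by (simp add: X_def matrix_mult_cross_indicator vec_eq_iff)
  ultimately show ?thesis
    unfolding SAP_def by blast
qed

definition balancing_weight :: "'a set \<Rightarrow> 'a \<Rightarrow> real" where
  "balancing_weight S x = (if x = (SOME c. c \<in> S) then 1 - real (card S) else 1)"

lemma balancing_weight_nonzero: "card S \<noteq> 1 \<Longrightarrow> balancing_weight S x \<noteq> 0"
  by (simp add: balancing_weight_def)

lemma sum_balancing_weight:
  assumes "finite S"
  shows "(\<Sum>x\<in>S. balancing_weight S x) = 0"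
proof (cases "S = {}")
  case False
  define c where "c = (SOME c. c \<in> S)"
  have "c \<in> S"
    unfolding c_def using False by (simp add: some_in_eq)
  then have "(\<Sum>x\<in>S. balancing_weight S x) = (1 - real (card S)) + (\<Sum>x\<in>S - {c}. 1)"
    using assms by (simp add: sum.remove balancing_weight_def c_def[symmetric])
  also have "\<dots> = 0"
  proof -
    have "1 \<le> card S"
      using \<open>c \<in> S\<close> assms by (metis One_nat_def Suc_leI card_gt_0_iff empty_iff)
    then show ?thesis
      using \<open>c \<in> S\<close> by (simp add: card_Diff_singleton of_nat_diff)
  qed
  finally show ?thesis .
qed simp

definition weighted_adjacency :: "('n \<Rightarrow> 'n \<Rightarrow> bool) \<Rightarrow> ('n \<Rightarrow> 'n \<Rightarrow> real) \<Rightarrow> real^'n^'n" where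
  "weighted_adjacency E w = (\<chi> i j. if E i j then w i j * w j i else 0)"

lemma with_diagonal_weighted_adjacency_in_S_graph:
  assumes "simple_graph E" and "\<And>i j. w i j \<noteq> 0"
  shows "with_diagonal (weighted_adjacency E w) d \<in> S_graph E"
  using assms unfolding S_graph_def simple_graph_def
  by (auto simp: with_diagonal_def weighted_adjacency_def transpose_def vec_eq_iff)

text \<open>On an edge at most one of the two factors w i j, w j i of this weight differs from 1,
so each vertex of R keeps its balancing weights in its row.\<close>
definition barbell_weight ::
  "('n::finite \<Rightarrow> 'n \<Rightarrow> bool) \<Rightarrow> 'n set \<Rightarrow> 'n set \<Rightarrow> 'n set \<Rightarrow> 'n \<Rightarrow> 'n \<Rightarrow> real" where
  "barbell_weight E R W1 W2 v j =
    (if v \<in> R \<and> j \<in> W1 then balancing_weight (nbhd E v \<inter> W1) j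
     else if v \<in> R \<and> j \<in> W2 then balancing_weight (nbhd E v \<inter> W2) j else 1)"

lemma barbell_row_sum_zero:
  assumes "barbell_partition E R W1 W2" and "v \<in> R" and "W = W1 \<or> W = W2"
  shows "(\<Sum>j\<in>W. weighted_adjacency E (barbell_weight E R W1 W2) $ v $ j) = 0"
proof -
  have "(\<Sum>j\<in>W. weighted_adjacency E (barbell_weight E R W1 W2) $ v $ j) =
      (\<Sum>j\<in>W. if j \<in> nbhd E v then balancing_weight (nbhd E v \<inter> W) j else 0)"
    using assms unfolding barbell_partition_def
    by (intro sum.cong) (auto simp: weighted_adjacency_def barbell_weight_def nbhd_def)
  also have "\<dots> = (\<Sum>j\<in>W \<inter> nbhd E v. balancing_weight (nbhd E v \<inter> W) j)"
    by (simp add: sum.inter_restrict)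
  also have "\<dots> = 0"
    using sum_balancing_weight[of "nbhd E v \<inter> W"] by (simp add: Int_commute)
  finally show ?thesis .
qed

lemma barbell_partition_S_graph_block_row_sums_zero:
  assumes "simple_graph E" and bp: "barbell_partition E R W1 W2"
  obtains M where "M \<in> S_graph E"
    and "\<And>i. (\<Sum>j\<in>W1. M $ i $ j) = 0" and "\<And>i. (\<Sum>j\<in>W2. M $ i $ j) = 0"
proof -
  define A where "A = weighted_adjacency E (barbell_weight E R W1 W2)"
  have no_edges: "A $ i $ j = 0" if "i \<in> W1 \<and> j \<in> W2 \<or> i \<in> W2 \<and> j \<in> W1" for i j
    using that bp assms(1) unfolding barbell_partition_def simple_graph_def
    by (auto simp: A_def weighted_adjacency_def)
  have disjoint: "W1 \<inter> W2 = {}"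
    using bp unfolding barbell_partition_def by blast
  have outside: "(\<Sum>j\<in>W1. A $ i $ j) = 0 \<and> (\<Sum>j\<in>W2. A $ i $ j) = 0"
    if "i \<notin> W1" "i \<notin> W2" for i
  proof -
    have "i \<in> R"
      using that bp unfolding barbell_partition_def by blast
    then show ?thesis
      unfolding A_def using barbell_row_sum_zero[OF bp] by blast
  qed
  obtain d where "\<And>i. (\<Sum>j\<in>W1. with_diagonal A d $ i $ j) = 0"
    and "\<And>i. (\<Sum>j\<in>W2. with_diagonal A d $ i $ j) = 0"
    by (rule block_row_sums_zero_with_diagonal[OF disjoint _ _ outside]) (use no_edges in auto)
  moreover have "barbell_weight E R W1 W2 i j \<noteq> 0" for i j
    using bp unfolding barbell_partition_def barbell_weight_def
    by (auto simp: balancing_weight_nonzero)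
  then have "with_diagonal A d \<in> S_graph E"
    unfolding A_def by (intro with_diagonal_weighted_adjacency_in_S_graph assms(1))
  ultimately show thesis
    using that by blast
qed

theorem lemma2p5:
  fixes E :: "'n::finite \<Rightarrow> 'n \<Rightarrow> bool"
  assumes "simple_graph E"
    and "\<exists>R W1 W2. barbell_partition E R W1 W2"
  shows "\<exists>M \<in> S_graph E. \<not> SAP M \<and> \<not> SSP M"
proof -
  obtain R W1 W2 where bp: "barbell_partition E R W1 W2"
    using assms(2) by blast
  obtain M where M: "M \<in> S_graph E"
    and sums: "\<And>i. (\<Sum>j\<in>W1. M $ i $ j) = 0" "\<And>i. (\<Sum>j\<in>W2. M $ i $ j) = 0"
    using barbell_partition_S_graph_block_row_sums_zero[OF assms(1) bp] by blast
  have symmetric: "transpose M = M"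
    using M by (simp add: S_graph_def)
  have "M $ i $ j = 0" if "i \<in> W1" "j \<in> W2" for i j
  proof -
    have "i \<noteq> j" "\<not> E i j"
      using that bp unfolding barbell_partition_def by auto
    then show ?thesis
      using M unfolding S_graph_def by blast
  qed
  moreover have "W1 \<inter> W2 = {}" "W1 \<noteq> {}" "W2 \<noteq> {}"
    using bp unfolding barbell_partition_def by auto
  ultimately have "\<not> SAP M"
    using not_SAP_if_block_row_sums_zero[OF symmetric _ _ _ _ sums] by blast
  with symmetric have "\<not> SSP M"
    using SAP_if_SSP by blast
  with M \<open>\<not> SAP M\<close> show ?thesis
    by blast
qed

end
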